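(* Let $k\ge 1$ and $n\ge 3k-1$ be integers. Let $x,y\in\mathbb{Z}^2$ with $x\ne y$, $3k-n<d(x,y)\le k$, and \[\pi_n\big(B_{\mathbb{Z}^2}[x,k]\cap B_{\mathbb{Z}^2}[y,k]\big)=\pi_n\big(B_{\mathbb{Z}^2}[x,k]\big)\cap\pi_n\big(B_{\mathbb{Z}^2}[y,k]\big).\] Then every maximal simplex $\tau$ of $\mathrm{VR}(T_{n,n};k)$ containing $\pi_n(x)$ and $\pi_n(y)$ is of the form $\tau=\pi_n(\sigma)$ for some maximal simplex $\sigma$ of $\mathrm{VR}(\mathbb{Z}^2;k)$.
   Context: $\mathbb{Z}^2$ carries the $l^1$ metric $d$, and $B_{\mathbb{Z}^2}[x,k]=\{z\in\mathbb{Z}^2: d(x,z)\le k\}$. $T_{n,n}=\mathbb{Z}^2/(n\mathbb{Z}\times n\mathbb{Z})$ with quotient map $\pi_n$ (reduction of both coordinates mod $n$) and quotient metric $d([x],[y])=\min\{d(x',y'): \pi_n(x')=[x],\pi_n(y')=[y]\}$. $\mathrm{VR}(X;r)$ is the simplicial complex on vertex set $X$ whose simplices are the finite nonempty subsets of diameter at most $r$; a maximal simplex is one not properly contained in another simplex. *)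

theory Defs
  imports Main
begin

type_synonym pt = "int \<times> int"

definition l1 :: "pt \<Rightarrow> pt \<Rightarrow> int" where
  "l1 p q = \<bar>fst p - fst q\<bar> + \<bar>snd p - snd q\<bar>"

definition ballZ :: "pt \<Rightarrow> int \<Rightarrow> pt set" where
  "ballZ x k = {z. l1 x z \<le> k}"

text \<open>Torus T_{n,n}: classes represented by their reduced representatives in {0..<n}^2\<close>
definition torus :: "int \<Rightarrow> pt set" where
  "torus n = {0..<n} \<times> {0..<n}"

definition proj :: "int \<Rightarrow> pt \<Rightarrow> pt" where
  "proj n p = (fst p mod n, snd p mod n)"

definition tdist :: "int \<Rightarrow> pt \<Rightarrow> pt \<Rightarrow> int" where
  "tdist n a b = Inf {l1 x' y' | x' y'. proj n x' = a \<and> proj n y' = b}"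

definition vr_simplex :: "'a set \<Rightarrow> ('a \<Rightarrow> 'a \<Rightarrow> int) \<Rightarrow> int \<Rightarrow> 'a set \<Rightarrow> bool" where
  "vr_simplex X dist r S \<longleftrightarrow>
     S \<subseteq> X \<and> finite S \<and> S \<noteq> {} \<and> (\<forall>u\<in>S. \<forall>v\<in>S. dist u v \<le> r)"

definition vr_maximal :: "'a set \<Rightarrow> ('a \<Rightarrow> 'a \<Rightarrow> int) \<Rightarrow> int \<Rightarrow> 'a set \<Rightarrow> bool" where
  "vr_maximal X dist r S \<longleftrightarrow>
     vr_simplex X dist r S \<and> (\<forall>S'. vr_simplex X dist r S' \<and> S \<subseteq> S' \<longrightarrow> S' = S)"

end

theory Submission
  imports Defs
begin

(* In the rotated coordinates u = s1 + s2, v = s1 - s2 the l1 metric is the sup metric, and a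
   lattice translation n(i,j) becomes (n(i+j), n(i-j)). Two points z, w of B[x,k] \<inter> B[y,k]
   differ by at most 2k in each rotated coordinate, and by less than n - k in the coordinate
   realising d(x,y) > 3k - n. So if some translate of w by n(i,j) is within k of z, then
   |n(i+j)|, |n(i-j)| \<le> 3k < 2n and one of them is < n, which forces i = j = 0: on
   B[x,k] \<inter> B[y,k] the torus distance is the l1 distance.
   By the hypothesis on projections every vertex of \<tau> has a lift in B[x,k] \<inter> B[y,k]; these
   lifts form a simplex of VR(Z^2;k), which extends to a maximal simplex \<sigma> because balls are
   finite, and \<pi>(\<sigma>) is a simplex containing \<tau>, hence equal to \<tau> by maximality. *)

lemma abs_translate_le_two_centres:
  fixes x y z w s k :: "'a::linordered_idom"
  assumes "\<bar>z - x\<bar> \<le> k" "\<bar>z - y\<bar> \<le> k" "\<bar>w - x\<bar> \<le> k" "\<bar>w - y\<bar> \<le> k"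
    and "\<bar>z - (w + s)\<bar> \<le> k"
  shows "\<bar>s\<bar> + \<bar>x - y\<bar> \<le> 3 * k"
  using assms by arith

lemma abs_mult_less_imp_abs_less:
  fixes n m c :: "'a::linordered_idom"
  assumes "n > 0" and "\<bar>n * m\<bar> < n * c"
  shows "\<bar>m\<bar> < c"
  using assms by (simp add: abs_mult)

lemma l1_eq_max_rotated:
  "l1 p q = max \<bar>(fst p + snd p) - (fst q + snd q)\<bar> \<bar>(fst p - snd p) - (fst q - snd q)\<bar>"
  unfolding l1_def by arith

lemma ball_inter_close_translate_trivial:
  fixes k n i j :: int and x y z w :: pt
  assumes k_pos: "k \<ge> 1" and n_large: "n \<ge> 3 * k - 1" and xy: "3 * k - n < l1 x y"
    and z: "z \<in> ballZ x k \<inter> ballZ y k" and w: "w \<in> ballZ x k \<inter> ballZ y k"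
    and close: "l1 z (fst w + n * i, snd w + n * j) \<le> k"
  shows "i = 0 \<and> j = 0"
proof -
  define u :: "pt \<Rightarrow> int" where "u p = fst p + snd p" for p
  define v :: "pt \<Rightarrow> int" where "v p = fst p - snd p" for p
  have l1_uv: "l1 p q = max \<bar>u p - u q\<bar> \<bar>v p - v q\<bar>" for p q
    unfolding u_def v_def by (rule l1_eq_max_rotated)
  have "\<bar>u z - (u w + n * (i + j))\<bar> \<le> k" "\<bar>v z - (v w + n * (i - j))\<bar> \<le> k"
    using close unfolding l1_uv by (auto simp: u_def v_def algebra_simps)
  moreover have "\<bar>u z - u x\<bar> \<le> k" "\<bar>u z - u y\<bar> \<le> k" "\<bar>u w - u x\<bar> \<le> k" "\<bar>u w - u y\<bar> \<le> k"
    "\<bar>v z - v x\<bar> \<le> k" "\<bar>v z - v y\<bar> \<le> k" "\<bar>v w - v x\<bar> \<le> k" "\<bar>v w - v y\<bar> \<le> k"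
    using z w by (auto simp: ballZ_def l1_uv abs_minus_commute)
  ultimately have su: "\<bar>n * (i + j)\<bar> + \<bar>u x - u y\<bar> \<le> 3 * k"
    and sv: "\<bar>n * (i - j)\<bar> + \<bar>v x - v y\<bar> \<le> 3 * k"
    using abs_translate_le_two_centres by blast+
  have n0: "n > 0" using k_pos n_large by linarith
  have "\<bar>i + j\<bar> < 2" "\<bar>i - j\<bar> < 2"
    using abs_mult_less_imp_abs_less[OF n0, of "i + j" 2] abs_mult_less_imp_abs_less[OF n0, of "i - j" 2]
      su sv k_pos n_large by linarith+
  moreover have "\<bar>i + j\<bar> < 1 \<or> \<bar>i - j\<bar> < 1"
    using abs_mult_less_imp_abs_less[OF n0, of "i + j" 1] abs_mult_less_imp_abs_less[OF n0, of "i - j" 1]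
      su sv xy unfolding l1_uv by linarith
  \<comment> \<open>\<open>i + j\<close> and \<open>i - j\<close> have the same parity\<close>
  ultimately show ?thesis by arith
qed

lemma proj_eq_iff_translate:
  "proj n p = proj n q \<longleftrightarrow> (\<exists>i j. p = (fst q + n * i, snd q + n * j))"
proof
  assume "proj n p = proj n q"
  then have "n dvd fst p - fst q" "n dvd snd p - snd q"
    by (auto simp: proj_def mod_eq_dvd_iff)
  then obtain i j where "fst p - fst q = n * i" "snd p - snd q = n * j"
    by (auto elim!: dvdE)
  then show "\<exists>i j. p = (fst q + n * i, snd q + n * j)"
    by (metis add.commute diff_add_cancel prod.collapse)
qed (auto simp: proj_def)

lemma proj_in_torus: "n > 0 \<Longrightarrow> proj n p \<in> torus n"
  by (simp add: proj_def torus_def)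

lemma proj_torus_id: "a \<in> torus n \<Longrightarrow> proj n a = a"
  by (cases a) (auto simp: proj_def torus_def)

lemma tdist_proj_le_l1: "tdist n (proj n p) (proj n q) \<le> l1 p q"
  unfolding tdist_def
  by (rule cInf_lower) (blast, auto simp: l1_def intro!: bdd_belowI[where m = 0])

lemma tdist_proj_le_imp_translate:
  assumes "tdist n (proj n p) (proj n q) \<le> k"
  shows "\<exists>i j. l1 p (fst q + n * i, snd q + n * j) \<le> k"
proof -
  let ?D = "{l1 p' q' | p' q'. proj n p' = proj n p \<and> proj n q' = proj n q}"
  have "?D \<noteq> {}" by blast
  moreover have "bdd_below ?D" by (auto simp: l1_def intro!: bdd_belowI[where m = 0])
  \<comment> \<open>the infimum of a nonempty set of integers bounded below is attained\<close>
  ultimately obtain p' q' where pq': "proj n p' = proj n p" "proj n q' = proj n q" "l1 p' q' < k + 1"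
    using assms cInf_less_iff[of ?D "k + 1"] unfolding tdist_def by auto
  obtain i1 j1 i2 j2 where "p' = (fst p + n * i1, snd p + n * j1)" "q' = (fst q + n * i2, snd q + n * j2)"
    using pq'(1,2) unfolding proj_eq_iff_translate by blast
  then have "l1 p (fst q + n * (i2 - i1), snd q + n * (j2 - j1)) = l1 p' q'"
    by (simp add: l1_def algebra_simps)
  with pq'(3) show ?thesis by (metis zle_add1_eq_le)
qed

lemma l1_le_if_tdist_le:
  fixes k n :: int and x y z w :: pt
  assumes k_pos: "k \<ge> 1" and n_large: "n \<ge> 3 * k - 1" and xy: "3 * k - n < l1 x y"
    and z: "z \<in> ballZ x k \<inter> ballZ y k" and w: "w \<in> ballZ x k \<inter> ballZ y k"
    and "tdist n (proj n z) (proj n w) \<le> k"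
  shows "l1 z w \<le> k"
proof -
  obtain i j where close: "l1 z (fst w + n * i, snd w + n * j) \<le> k"
    using tdist_proj_le_imp_translate assms(6) by blast
  with ball_inter_close_translate_trivial[OF k_pos n_large xy z w] have "i = 0 \<and> j = 0" by blast
  with close show ?thesis by simp
qed

lemma torus_simplex_subset_proj_ball:
  assumes "vr_simplex (torus n) (tdist n) k \<tau>" and "proj n c \<in> \<tau>"
  shows "\<tau> \<subseteq> proj n ` ballZ c k"
proof
  fix t assume t: "t \<in> \<tau>"
  then have "t \<in> torus n" and "tdist n (proj n c) (proj n t) \<le> k"
    using assms proj_torus_id[of t n] by (auto simp: vr_simplex_def)
  then obtain i j where "l1 c (fst t + n * i, snd t + n * j) \<le> k"
    using tdist_proj_le_imp_translate by blast
  moreover have "proj n (fst t + n * i, snd t + n * j) = t"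
    using proj_eq_iff_translate proj_torus_id[OF \<open>t \<in> torus n\<close>] by metis
  ultimately show "t \<in> proj n ` ballZ c k"
    unfolding ballZ_def by (metis (mono_tags) image_eqI mem_Collect_eq)
qed

lemma vr_simplex_proj:
  assumes "n > 0" and "vr_simplex UNIV l1 k \<sigma>"
  shows "vr_simplex (torus n) (tdist n) k (proj n ` \<sigma>)"
  unfolding vr_simplex_def
proof (intro conjI ballI)
  show "proj n ` \<sigma> \<subseteq> torus n" using proj_in_torus[OF \<open>n > 0\<close>] by blast
  show "finite (proj n ` \<sigma>)" "proj n ` \<sigma> \<noteq> {}" using assms(2) by (auto simp: vr_simplex_def)
  fix a b assume "a \<in> proj n ` \<sigma>" "b \<in> proj n ` \<sigma>"
  then obtain p q where "p \<in> \<sigma>" "q \<in> \<sigma>" "a = proj n p" "b = proj n q" by blast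
  then show "tdist n a b \<le> k"
    using assms(2) tdist_proj_le_l1[of n p q] unfolding vr_simplex_def by fastforce
qed

lemma vr_simplex_subset_maximal:
  assumes locally_finite: "\<And>x. x \<in> X \<Longrightarrow> finite {y \<in> X. dist x y \<le> r}"
    and S: "vr_simplex X dist r S"
  shows "\<exists>\<sigma>. vr_maximal X dist r \<sigma> \<and> S \<subseteq> \<sigma>"
proof -
  define A where "A = {S'. vr_simplex X dist r S' \<and> S \<subseteq> S'}"
  obtain s where s: "s \<in> S" "s \<in> X" using S by (auto simp: vr_simplex_def)
  have "A \<subseteq> Pow {y \<in> X. dist s y \<le> r}"
    using s unfolding A_def vr_simplex_def by blast
  then have "finite A" using locally_finite[OF s(2)] by (meson finite_Pow_iff finite_subset)
  moreover have "S \<in> A" using S by (simp add: A_def)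
  ultimately obtain \<sigma> where "\<sigma> \<in> A" "S \<subseteq> \<sigma>" "\<forall>S'\<in>A. \<sigma> \<subseteq> S' \<longrightarrow> \<sigma> = S'"
    using finite_has_maximal2 by metis
  then show ?thesis unfolding A_def vr_maximal_def by blast
qed

lemma finite_ballZ: "finite (ballZ c k)"
proof (rule finite_subset)
  show "ballZ c k \<subseteq> {fst c - k..fst c + k} \<times> {snd c - k..snd c + k}"
    by (auto simp: ballZ_def l1_def)
qed simp

theorem lemma5p3:
  fixes k n :: int and x y :: pt
  assumes "k \<ge> 1" and "n \<ge> 3 * k - 1"
    and "x \<noteq> y" and "3 * k - n < l1 x y" and "l1 x y \<le> k"
    and "proj n ` (ballZ x k \<inter> ballZ y k) = proj n ` ballZ x k \<inter> proj n ` ballZ y k"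
  shows "\<forall>\<tau>. vr_maximal (torus n) (tdist n) k \<tau> \<and> proj n x \<in> \<tau> \<and> proj n y \<in> \<tau>
           \<longrightarrow> (\<exists>\<sigma>. vr_maximal UNIV l1 k \<sigma> \<and> \<tau> = proj n ` \<sigma>)"
proof (intro allI impI)
  fix \<tau> assume \<tau>: "vr_maximal (torus n) (tdist n) k \<tau> \<and> proj n x \<in> \<tau> \<and> proj n y \<in> \<tau>"
  then have \<tau>_simplex: "vr_simplex (torus n) (tdist n) k \<tau>" by (simp add: vr_maximal_def)
  define S where "S = {z \<in> ballZ x k \<inter> ballZ y k. proj n z \<in> \<tau>}"
  have "\<tau> \<subseteq> proj n ` ballZ x k" "\<tau> \<subseteq> proj n ` ballZ y k"
    using torus_simplex_subset_proj_ball[OF \<tau>_simplex] \<tau> by simp_all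
  then have lifts: "\<tau> \<subseteq> proj n ` (ballZ x k \<inter> ballZ y k)"
    by (simp add: assms(6))
  have proj_S: "proj n ` S = \<tau>"
  proof
    show "proj n ` S \<subseteq> \<tau>" unfolding S_def by blast
    show "\<tau> \<subseteq> proj n ` S" using lifts unfolding S_def by fastforce
  qed
  have "vr_simplex UNIV l1 k S"
    unfolding vr_simplex_def
  proof (intro conjI ballI)
    show "finite S" by (rule finite_subset[OF _ finite_ballZ[of x k]]) (auto simp: S_def)
    show "S \<noteq> {}" using proj_S \<tau>_simplex by (auto simp: vr_simplex_def)
    fix z w assume "z \<in> S" "w \<in> S"
    moreover from this have "tdist n (proj n z) (proj n w) \<le> k"
      using \<tau>_simplex unfolding S_def vr_simplex_def by blast
    ultimately show "l1 z w \<le> k"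
      using l1_le_if_tdist_le[OF assms(1,2,4)] unfolding S_def by blast
  qed simp
  moreover have "finite {z \<in> UNIV. l1 c z \<le> k}" for c
    using finite_ballZ[of c k] by (simp add: ballZ_def)
  ultimately obtain \<sigma> where \<sigma>: "vr_maximal UNIV l1 k \<sigma>" "S \<subseteq> \<sigma>"
    using vr_simplex_subset_maximal[of UNIV l1 k S] by blast
  have "vr_simplex (torus n) (tdist n) k (proj n ` \<sigma>)"
    using vr_simplex_proj[of n] assms(1,2) \<sigma>(1) by (simp add: vr_maximal_def)
  moreover have "\<tau> \<subseteq> proj n ` \<sigma>" using proj_S \<sigma>(2) by blast
  ultimately have "\<tau> = proj n ` \<sigma>" using \<tau> unfolding vr_maximal_def by blast
  with \<sigma>(1) show "\<exists>\<sigma>. vr_maximal UNIV l1 k \<sigma> \<and> \<tau> = proj n ` \<sigma>" by blast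
qed

end
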